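(* Let $G$ be a locally compact, non-compact, Hausdorff topological group. Then $G^*=G^{\mathcal{LUC}}\setminus\varepsilon(G)$ is a left ideal of $G^{\mathcal{LUC}}$ if and only if $G$ is topologically weak left cancellative.
   Context: For a topological group (or semitopological semigroup) $G$: $\mathcal{CB}(G)$ is the C*-algebra of bounded continuous complex functions with sup norm, $L_sf(x)=f(sx)$. $\mathcal{LUC}(G)$ is the C*-algebra of $f\in\mathcal{CB}(G)$ such that $s\mapsto L_sf$ is norm continuous from $G$ to $\mathcal{CB}(G)$; for locally compact Hausdorff groups it coincides with $Lmc(G)=\{f\in\mathcal{CB}(G):T_\mu f\in\mathcal{CB}(G)\ \forall\mu\in\beta G\}$, where $\beta G$ is the spectrum of $\mathcal{CB}(G)$ and $(T_\mu f)(s)=\mu(L_sf)$. $G^{\mathcal{LUC}}$ is the spectrum of $\mathcal{LUC}(G)$ with the Gelfand topology and multiplication $\mu\nu=\mu\circ T_\nu$, where $(T_\nu f)(s)=\nu(L_sf)$; $\varepsilon:G\to G^{\mathcal{LUC}}$ is evaluation. A left ideal is a nonempty $L$ with $\mu L\subseteq L$ for all $\mu\in G^{\mathcal{LUC}}$. Zero sets: $Z(Lmc(G))=\{f^{-1}(0):f\in Lmc(G)\}$; $E_\epsilon(f)=\{x:|f(x)|\le\epsilon\}$; $e(u)=\{E_\epsilon(f):f\in Lmc(G),f(u)=0,\epsilon>0\}$. $G$ is topologically weak left cancellative if for every $u\in G$ there exists a compact $A\in Z(Lmc(G))$ with $A\in e(u)$ such that $\{t\in G:vt\in A\}$ is compact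 for every $v\in G$. *)

theory Defs
  imports "HOL-Analysis.Analysis"
begin

definition topological_group :: "('a::topological_space \<Rightarrow> 'a \<Rightarrow> 'a) \<Rightarrow> 'a \<Rightarrow> ('a \<Rightarrow> 'a) \<Rightarrow> bool" where
  "topological_group gm ge gi \<longleftrightarrow>
     group gm ge gi \<and>
     continuous_on UNIV (\<lambda>p. gm (fst p) (snd p)) \<and>
     continuous_on UNIV gi"

definition CB :: "('a::topological_space \<Rightarrow> complex) set" where
  "CB = {f. continuous_on UNIV f \<and> bounded (range f)}"

definition Ltr :: "('a \<Rightarrow> 'a \<Rightarrow> 'a) \<Rightarrow> 'a \<Rightarrow> ('a \<Rightarrow> complex) \<Rightarrow> ('a \<Rightarrow> complex)" where
  "Ltr gm s f = (\<lambda>x. f (gm s x))"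

text \<open>LUC(G): f in CB(G) with s \<mapsto> L_s f norm continuous (sup norm), written out:
  for every s and every e > 0 there is a neighbourhood U of s with
  sup_x |f(tx) - f(sx)| \<le> e for all t in U.\<close>
definition LUC :: "('a::topological_space \<Rightarrow> 'a \<Rightarrow> 'a) \<Rightarrow> ('a \<Rightarrow> complex) set" where
  "LUC gm = {f \<in> CB. \<forall>s. \<forall>e>0. \<exists>U. open U \<and> s \<in> U \<and>
       (\<forall>t\<in>U. \<forall>x. cmod (Ltr gm t f x - Ltr gm s f x) \<le> e)}"

text \<open>Functionals are represented extensionally
  (value 0 outside A) so that equality of characters is equality on A.\<close>
definition characters :: "('a \<Rightarrow> complex) set \<Rightarrow> (('a \<Rightarrow> complex) \<Rightarrow> complex) set" where
  "characters A = {\<phi>.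
      (\<forall>f. f \<notin> A \<longrightarrow> \<phi> f = 0) \<and>
      (\<forall>f\<in>A. \<forall>g\<in>A. \<phi> (\<lambda>x. f x + g x) = \<phi> f + \<phi> g) \<and>
      (\<forall>f\<in>A. \<forall>c. \<phi> (\<lambda>x. c * f x) = c * \<phi> f) \<and>
      (\<forall>f\<in>A. \<forall>g\<in>A. \<phi> (\<lambda>x. f x * g x) = \<phi> f * \<phi> g) \<and>
      (\<exists>f\<in>A. \<phi> f \<noteq> 0)}"

definition betaG :: "(('a::topological_space \<Rightarrow> complex) \<Rightarrow> complex) set" where
  "betaG = characters CB"

definition GLUC :: "('a::topological_space \<Rightarrow> 'a \<Rightarrow> 'a) \<Rightarrow> (('a \<Rightarrow> complex) \<Rightarrow> complex) set" where
  "GLUC gm = characters (LUC gm)"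

definition Top :: "('a \<Rightarrow> 'a \<Rightarrow> 'a) \<Rightarrow> (('a \<Rightarrow> complex) \<Rightarrow> complex) \<Rightarrow> ('a \<Rightarrow> complex) \<Rightarrow> ('a \<Rightarrow> complex)" where
  "Top gm \<nu> f = (\<lambda>s. \<nu> (Ltr gm s f))"

definition luc_mult :: "('a::topological_space \<Rightarrow> 'a \<Rightarrow> 'a) \<Rightarrow> (('a \<Rightarrow> complex) \<Rightarrow> complex)
     \<Rightarrow> (('a \<Rightarrow> complex) \<Rightarrow> complex) \<Rightarrow> (('a \<Rightarrow> complex) \<Rightarrow> complex)" where
  "luc_mult gm \<mu> \<nu> = (\<lambda>f. if f \<in> LUC gm then \<mu> (Top gm \<nu> f) else 0)"

definition evalmap :: "('a::topological_space \<Rightarrow> 'a \<Rightarrow> 'a) \<Rightarrow> 'a \<Rightarrow> (('a \<Rightarrow> complex) \<Rightarrow> complex)" where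
  "evalmap gm x = (\<lambda>f. if f \<in> LUC gm then f x else 0)"

definition left_ideal :: "('a::topological_space \<Rightarrow> 'a \<Rightarrow> 'a) \<Rightarrow> (('a \<Rightarrow> complex) \<Rightarrow> complex) set \<Rightarrow> bool" where
  "left_ideal gm L \<longleftrightarrow> L \<noteq> {} \<and> L \<subseteq> GLUC gm \<and>
     (\<forall>\<mu>\<in>GLUC gm. \<forall>\<nu>\<in>L. luc_mult gm \<mu> \<nu> \<in> L)"

definition Lmc :: "('a::topological_space \<Rightarrow> 'a \<Rightarrow> 'a) \<Rightarrow> ('a \<Rightarrow> complex) set" where
  "Lmc gm = {f \<in> CB. \<forall>\<mu>\<in>betaG. Top gm \<mu> f \<in> CB}"

definition Zsets :: "('a::topological_space \<Rightarrow> 'a \<Rightarrow> 'a) \<Rightarrow> 'a set set" where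
  "Zsets gm = {f -` {0} | f. f \<in> Lmc gm}"

definition Eset :: "real \<Rightarrow> ('a \<Rightarrow> complex) \<Rightarrow> 'a set" where
  "Eset e f = {x. cmod (f x) \<le> e}"

definition esets :: "('a::topological_space \<Rightarrow> 'a \<Rightarrow> 'a) \<Rightarrow> 'a \<Rightarrow> 'a set set" where
  "esets gm u = {Eset e f | e f. f \<in> Lmc gm \<and> f u = 0 \<and> e > 0}"

definition top_weak_left_cancellative :: "('a::topological_space \<Rightarrow> 'a \<Rightarrow> 'a) \<Rightarrow> bool" where
  "top_weak_left_cancellative gm \<longleftrightarrow>
     (\<forall>u. \<exists>A. compact A \<and> A \<in> Zsets gm \<and> A \<in> esets gm u \<and>
            (\<forall>v. compact {t. gm v t \<in> A}))"

end

theory Submission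
  imports Defs
begin

text \<open>
  Both sides of the equivalence hold for every locally compact, non-compact Hausdorff group.
  Weak left cancellativity is immediate in a group: for a bump function g at u, the compact set
  A = {g \<ge> 1/2} is a zero set lying in e(u), and {t. v t \<in> A} = v^-1 A is compact.

  That the remainder is a left ideal rests on the fact that a character \<nu> of LUC(G) which is not
  an evaluation vanishes on every compactly supported continuous h: by compactness of the support
  K, the kernel of \<nu> contains a function w \<ge> 1/4 on K (a finite sum of squares of functions in
  the kernel), and h = (h / w) w. If \<mu>\<nu> were the evaluation at x, a bump function f at x would
  give 1 = f x = \<mu> (T_\<nu> f) = 0, because every translate L_s f has compact support. Finally,
  non-compactness produces a non-evaluation character as a cluster point, in a Tychonoff cube,
  of the evaluations along the cocompact filter.
\<close>

section \<open>Topological groups\<close>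

locale tgroup =
  fixes gm :: "'a::topological_space \<Rightarrow> 'a \<Rightarrow> 'a" and ge :: 'a and gi :: "'a \<Rightarrow> 'a"
  assumes topological_group: "topological_group gm ge gi"
begin

sublocale group gm ge gi
  using topological_group by (simp add: topological_group_def)

lemma continuous_on_mult: "continuous_on UNIV (\<lambda>p. gm (fst p) (snd p))"
  using topological_group by (simp add: topological_group_def)

lemma continuous_on_inverse: "continuous_on UNIV gi"
  using topological_group by (simp add: topological_group_def)

lemma continuous_on_left_translation: "continuous_on UNIV (gm a)"
proof -
  have "continuous_on UNIV (\<lambda>x. (a, x))" by (intro continuous_intros)
  from continuous_on_compose2[OF continuous_on_mult this] show ?thesis by simp
qed

lemma vimage_left_translation: "gm v -` A = gm (gi v) ` A"
proof
  show "gm v -` A \<subseteq> gm (gi v) ` A"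
  proof
    fix t assume "t \<in> gm v -` A"
    moreover have "t = gm (gi v) (gm v t)" by (simp add: assoc[symmetric])
    ultimately show "t \<in> gm (gi v) ` A" by blast
  qed
  show "gm (gi v) ` A \<subseteq> gm v -` A"
    by (auto simp: assoc[symmetric])
qed

lemma compact_vimage_left_translation: "compact A \<Longrightarrow> compact (gm v -` A)"
  unfolding vimage_left_translation
  by (rule compact_continuous_image[OF continuous_on_subset[OF continuous_on_left_translation]]) auto

lemma left_translation_uniform_on_compact:
  assumes f: "continuous_on UNIV f" and C: "compact C" and e: "e > 0"
  obtains X where "open X" "s \<in> X"
    "\<And>t x. t \<in> X \<Longrightarrow> x \<in> C \<Longrightarrow> cmod (f (gm t x) - f (gm s x)) < e"
proof -
  define W where "W = (\<lambda>p. f (gm (fst p) (snd p)) - f (gm s (snd p))) -` {z. cmod z < e}"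
  have "continuous_on UNIV (\<lambda>p. f (gm (fst p) (snd p)))"
    using continuous_on_compose2[OF f continuous_on_mult] by simp
  moreover have "continuous_on UNIV (\<lambda>p::'a \<times> 'a. f (gm s (snd p)))"
    using continuous_on_compose2[OF f continuous_on_compose2[OF continuous_on_left_translation
          continuous_on_snd[OF continuous_on_id]]]
    by simp
  ultimately have "continuous_on UNIV (\<lambda>p. f (gm (fst p) (snd p)) - f (gm s (snd p)))"
    by (intro continuous_intros)
  moreover have "open {z::complex. cmod z < e}"
    by (intro open_Collect_less continuous_intros)
  ultimately have "open W" unfolding W_def by (rule open_vimage[rotated])
  moreover have "{s} \<times> C \<subseteq> W" using e by (auto simp: W_def)
  ultimately have "\<exists>X. s \<in> X \<and> open X \<and> X \<times> C \<subseteq> W"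
    by (rule Elementary_Topology.tube_lemma[OF C])
  then obtain X where "s \<in> X" "open X" "X \<times> C \<subseteq> W" by blast
  moreover have "cmod (f (gm t x) - f (gm s x)) < e" if "t \<in> X" "x \<in> C" for t x
    using \<open>X \<times> C \<subseteq> W\<close> that by (auto simp: W_def)
  ultimately show ?thesis using that by blast
qed

end

lemma locally_compact_spaceE:
  fixes x :: "'a::topological_space"
  assumes "locally_compact_space (euclidean :: 'a topology)"
  obtains U K where "open U" "compact K" "x \<in> U" "U \<subseteq> K"
  using assms that unfolding locally_compact_space_def by (auto; meson)

lemma bump_function:
  fixes u :: "'a::t2_space"
  assumes "locally_compact_space (euclidean :: 'a topology)"
  obtains g :: "'a \<Rightarrow> real" and K where "continuous_on UNIV g" "compact K"
    "\<And>x. x \<notin> K \<Longrightarrow> g x = 0" "g u = 1" "\<And>x. 0 \<le> g x \<and> g x \<le> 1"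
proof -
  have "Hausdorff_space (euclidean :: 'a topology)"
    unfolding Hausdorff_space_def by (simp add: separation_t2 disjnt_def)
  then have creg: "completely_regular_space (euclidean :: 'a topology)"
    using locally_compact_regular_imp_completely_regular_space[OF assms] by blast
  obtain U K where UK: "open U" "compact K" "u \<in> U" "U \<subseteq> K"
    using locally_compact_spaceE[OF assms] .
  have "closedin euclidean (- U)" "compactin euclidean {u}" "disjnt {u} (- U)"
    using UK by (auto simp: closed_closedin[symmetric] disjnt_def)
  then obtain g where g: "continuous_map euclidean (top_of_set {0..1::real}) g"
      "g ` (- U) \<subseteq> {0}" "g ` {u} \<subseteq> {1}"
    using Urysohn_completely_regular_compact_closed[OF zero_le_one creg] by blast
  then have "continuous_on UNIV g" "\<And>x. 0 \<le> g x \<and> g x \<le> 1"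
    by (auto simp: continuous_map_in_subtopology)
  moreover have "\<And>x. x \<notin> K \<Longrightarrow> g x = 0" "g u = 1"
    using g(2,3) UK(4) by auto
  ultimately show ?thesis using that UK(2) by blast
qed

section \<open>The algebras CB(G) and LUC(G)\<close>

lemma CB_bounded: "f \<in> CB \<Longrightarrow> \<exists>B. \<forall>x. cmod (f x) \<le> B"
  unfolding CB_def bounded_iff by auto

lemma CB_const: "(\<lambda>x. c) \<in> CB"
  unfolding CB_def by simp

lemma CB_add:
  assumes "f \<in> CB" "g \<in> CB" shows "(\<lambda>x. f x + g x) \<in> CB"
proof -
  obtain B1 B2 where "\<forall>x. cmod (f x) \<le> B1" "\<forall>x. cmod (g x) \<le> B2"
    using CB_bounded assms by metis
  then have "\<forall>x. cmod (f x + g x) \<le> B1 + B2" by (metis add_mono norm_triangle_le)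
  then show ?thesis using assms unfolding CB_def bounded_iff by (auto intro: continuous_intros)
qed

lemma CB_mult_left:
  assumes "f \<in> CB" shows "(\<lambda>x. c * f x) \<in> CB"
proof -
  obtain B where "\<forall>x. cmod (f x) \<le> B" using CB_bounded assms by metis
  then have "\<forall>x. cmod (c * f x) \<le> cmod c * B" by (simp add: norm_mult mult_left_mono)
  then show ?thesis using assms unfolding CB_def bounded_iff by (auto intro: continuous_intros)
qed

lemma norm_diff_ge_of_norm_le:
  fixes a c :: complex
  assumes "cmod a \<le> B" shows "cmod c - B \<le> cmod (a - c)"
  using norm_triangle_ineq2[of c a] assms by (simp add: norm_minus_commute)

lemma CB_resolvent:
  assumes h: "h \<in> CB" "\<forall>x. cmod (h x) \<le> B" and Bc: "B < cmod c"
  shows "(\<lambda>x. 1 / (h x - c)) \<in> CB"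
proof -
  have dist: "cmod c - B \<le> cmod (h x - c)" for x
    using norm_diff_ge_of_norm_le h(2) by blast
  then have "\<forall>x. h x - c \<noteq> 0" using Bc by (smt (verit) norm_zero)
  then have "continuous_on UNIV (\<lambda>x. 1 / (h x - c))"
    using h(1) unfolding CB_def by (auto intro!: continuous_intros)
  moreover have "cmod (1 / (h x - c)) \<le> 1 / (cmod c - B)" for x
    using dist[of x] Bc by (simp add: norm_divide frac_le)
  ultimately show ?thesis unfolding CB_def bounded_iff by auto
qed

lemma LUC_CB: "f \<in> LUC gm \<Longrightarrow> f \<in> CB"
  unfolding LUC_def by auto

lemma LUC_D:
  "f \<in> LUC gm \<Longrightarrow> e > 0 \<Longrightarrow>
    \<exists>U. open U \<and> s \<in> U \<and> (\<forall>t\<in>U. \<forall>x. cmod (f (gm t x) - f (gm s x)) \<le> e)"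
  unfolding LUC_def Ltr_def by auto

lemma LUC_I:
  "f \<in> CB \<Longrightarrow>
    (\<And>s e. e > 0 \<Longrightarrow> \<exists>U. open U \<and> s \<in> U \<and> (\<forall>t\<in>U. \<forall>x. cmod (f (gm t x) - f (gm s x)) \<le> e))
    \<Longrightarrow> f \<in> LUC gm"
  unfolding LUC_def Ltr_def by auto

lemma LUC_const: "(\<lambda>x. c) \<in> LUC gm"
  by (rule LUC_I[OF CB_const]) (auto intro: exI[of _ UNIV])

lemma LUC_add:
  assumes f: "f \<in> LUC gm" and g: "g \<in> LUC gm" shows "(\<lambda>x. f x + g x) \<in> LUC gm"
proof (rule LUC_I)
  show "(\<lambda>x. f x + g x) \<in> CB" using CB_add LUC_CB f g by blast
  fix s and e :: real assume e: "e > 0"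
  obtain U1 where U1: "open U1" "s \<in> U1" "\<forall>t\<in>U1. \<forall>x. cmod (f (gm t x) - f (gm s x)) \<le> e/2"
    using LUC_D[OF f, of "e/2" s] e by auto
  obtain U2 where U2: "open U2" "s \<in> U2" "\<forall>t\<in>U2. \<forall>x. cmod (g (gm t x) - g (gm s x)) \<le> e/2"
    using LUC_D[OF g, of "e/2" s] e by auto
  have "cmod (f (gm t x) + g (gm t x) - (f (gm s x) + g (gm s x))) \<le> e"
    if "t \<in> U1 \<inter> U2" for t x
  proof -
    have "cmod (f (gm t x) + g (gm t x) - (f (gm s x) + g (gm s x)))
        \<le> cmod (f (gm t x) - f (gm s x)) + cmod (g (gm t x) - g (gm s x))"
      by (metis add_diff_add norm_triangle_ineq)
    moreover have "cmod (f (gm t x) - f (gm s x)) \<le> e/2" "cmod (g (gm t x) - g (gm s x)) \<le> e/2"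
      using U1(3) U2(3) that by auto
    ultimately show ?thesis by linarith
  qed
  then show "\<exists>U. open U \<and> s \<in> U \<and>
      (\<forall>t\<in>U. \<forall>x. cmod (f (gm t x) + g (gm t x) - (f (gm s x) + g (gm s x))) \<le> e)"
    using U1 U2 by (intro exI[of _ "U1 \<inter> U2"]) auto
qed

lemma LUC_mult_left:
  assumes f: "f \<in> LUC gm" shows "(\<lambda>x. c * f x) \<in> LUC gm"
proof (rule LUC_I)
  show "(\<lambda>x. c * f x) \<in> CB" using CB_mult_left LUC_CB f by blast
  fix s and e :: real assume e: "e > 0"
  have pos: "0 < cmod c + 1" by (simp add: add_nonneg_pos)
  define d where "d = e / (cmod c + 1)"
  have d: "d > 0" "cmod c * d \<le> e"
    using e pos by (simp_all add: d_def pos_divide_le_eq algebra_simps)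
  obtain U where U: "open U" "s \<in> U" "\<forall>t\<in>U. \<forall>x. cmod (f (gm t x) - f (gm s x)) \<le> d"
    using LUC_D[OF f d(1)] by blast
  have "cmod (c * f (gm t x) - c * f (gm s x)) \<le> e" if "t \<in> U" for t x
  proof -
    have "cmod (c * f (gm t x) - c * f (gm s x)) = cmod c * cmod (f (gm t x) - f (gm s x))"
      by (metis norm_mult right_diff_distrib)
    also have "\<dots> \<le> cmod c * d" using U(3) that by (intro mult_left_mono) auto
    finally show ?thesis using d(2) by linarith
  qed
  then show "\<exists>U. open U \<and> s \<in> U \<and> (\<forall>t\<in>U. \<forall>x. cmod (c * f (gm t x) - c * f (gm s x)) \<le> e)"
    using U by blast
qed

lemma LUC_diff: "f \<in> LUC gm \<Longrightarrow> g \<in> LUC gm \<Longrightarrow> (\<lambda>x. f x - g x) \<in> LUC gm"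
  using LUC_add[OF _ LUC_mult_left[of g gm "-1"], of f] by simp

lemma LUC_mult:
  assumes f: "f \<in> LUC gm" and g: "g \<in> LUC gm" shows "(\<lambda>x. f x * g x) \<in> LUC gm"
proof (rule LUC_I)
  obtain Bf Bg where B: "\<forall>x. cmod (f x) \<le> Bf" "\<forall>x. cmod (g x) \<le> Bg"
    using CB_bounded LUC_CB f g by metis
  have Bnn: "0 \<le> Bf" "0 \<le> Bg" using B norm_ge_zero order_trans by blast+
  have "\<forall>x. cmod (f x * g x) \<le> Bf * Bg" using B Bnn by (simp add: norm_mult mult_mono)
  then show "(\<lambda>x. f x * g x) \<in> CB"
    using LUC_CB f g unfolding CB_def bounded_iff by (auto intro: continuous_intros)
  fix s and e :: real assume e: "e > 0"
  define M where "M = Bf + Bg + 1"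
  have M: "M > 0" using Bnn M_def by simp
  obtain U1 where U1: "open U1" "s \<in> U1" "\<forall>t\<in>U1. \<forall>x. cmod (f (gm t x) - f (gm s x)) \<le> e/M"
    using LUC_D[OF f, of "e/M" s] e M by auto
  obtain U2 where U2: "open U2" "s \<in> U2" "\<forall>t\<in>U2. \<forall>x. cmod (g (gm t x) - g (gm s x)) \<le> e/M"
    using LUC_D[OF g, of "e/M" s] e M by auto
  have "cmod (f (gm t x) * g (gm t x) - f (gm s x) * g (gm s x)) \<le> e" if t: "t \<in> U1 \<inter> U2" for t x
  proof -
    let ?a = "f (gm t x)" and ?b = "g (gm t x)" and ?c = "f (gm s x)" and ?d = "g (gm s x)"
    have "?a * ?b - ?c * ?d = ?a * (?b - ?d) + ?d * (?a - ?c)" by (simp add: algebra_simps)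
    then have "cmod (?a * ?b - ?c * ?d) \<le> cmod ?a * cmod (?b - ?d) + cmod ?d * cmod (?a - ?c)"
      by (metis norm_mult norm_triangle_ineq)
    also have "\<dots> \<le> Bf * (e/M) + Bg * (e/M)"
      using B U1(3) U2(3) t Bnn by (intro add_mono mult_mono) auto
    also have "\<dots> = (Bf + Bg) * e / M" by (simp add: add_divide_distrib distrib_right)
    also have "\<dots> \<le> e" using M e by (simp add: M_def field_simps)
    finally show ?thesis .
  qed
  then show "\<exists>U. open U \<and> s \<in> U \<and>
      (\<forall>t\<in>U. \<forall>x. cmod (f (gm t x) * g (gm t x) - f (gm s x) * g (gm s x)) \<le> e)"
    using U1 U2 by (intro exI[of _ "U1 \<inter> U2"]) auto
qed

lemma LUC_cnj:
  assumes f: "f \<in> LUC gm" shows "(\<lambda>x. cnj (f x)) \<in> LUC gm"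
proof (rule LUC_I)
  show "(\<lambda>x. cnj (f x)) \<in> CB"
    using LUC_CB[OF f] unfolding CB_def bounded_iff by (auto intro: continuous_intros)
  fix s and e :: real assume "e > 0"
  then obtain U where "open U" "s \<in> U" "\<forall>t\<in>U. \<forall>x. cmod (f (gm t x) - f (gm s x)) \<le> e"
    using LUC_D[OF f] by blast
  then show "\<exists>U. open U \<and> s \<in> U \<and> (\<forall>t\<in>U. \<forall>x. cmod (cnj (f (gm t x)) - cnj (f (gm s x))) \<le> e)"
    by (metis complex_cnj_diff complex_mod_cnj)
qed

lemma norm_inverse_diff_le:
  fixes a b c :: complex
  assumes "d > 0" "d \<le> cmod (a - c)" "d \<le> cmod (b - c)"
  shows "cmod (1 / (a - c) - 1 / (b - c)) \<le> cmod (a - b) / d^2"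
proof -
  have "a - c \<noteq> 0" "b - c \<noteq> 0" using assms by auto
  then have "1 / (a - c) - 1 / (b - c) = (b - a) / ((a - c) * (b - c))" by (simp add: field_simps)
  then have "cmod (1 / (a - c) - 1 / (b - c)) = cmod (a - b) / (cmod (a - c) * cmod (b - c))"
    by (simp add: norm_divide norm_mult norm_minus_commute)
  also have "\<dots> \<le> cmod (a - b) / (d * d)"
    using assms by (intro divide_left_mono mult_mono mult_pos_pos) auto
  finally show ?thesis by (simp add: power2_eq_square)
qed

lemma LUC_resolvent:
  assumes h: "h \<in> LUC gm" "\<forall>x. cmod (h x) \<le> B" and Bc: "B < cmod c"
  shows "(\<lambda>x. 1 / (h x - c)) \<in> LUC gm"
proof (rule LUC_I)
  show "(\<lambda>x. 1 / (h x - c)) \<in> CB" using CB_resolvent LUC_CB h Bc by blast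
  fix s and e :: real assume e: "e > 0"
  define d where "d = cmod c - B"
  have d: "d > 0" "\<And>x. d \<le> cmod (h x - c)"
    using Bc norm_diff_ge_of_norm_le h(2) by (auto simp: d_def)
  obtain U where U: "open U" "s \<in> U" "\<forall>t\<in>U. \<forall>x. cmod (h (gm t x) - h (gm s x)) \<le> e * d^2"
    using LUC_D[OF h(1), of "e * d^2" s] e d by auto
  have "cmod (1 / (h (gm t x) - c) - 1 / (h (gm s x) - c)) \<le> e" if "t \<in> U" for t x
  proof -
    have "cmod (1 / (h (gm t x) - c) - 1 / (h (gm s x) - c)) \<le> cmod (h (gm t x) - h (gm s x)) / d^2"
      using norm_inverse_diff_le d by blast
    also have "\<dots> \<le> e" using U(3) that d by (simp add: divide_le_eq)
    finally show ?thesis .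
  qed
  then show "\<exists>U. open U \<and> s \<in> U \<and>
      (\<forall>t\<in>U. \<forall>x. cmod (1 / (h (gm t x) - c) - 1 / (h (gm s x) - c)) \<le> e)"
    using U by blast
qed

section \<open>Characters\<close>

lemma characters_outside: "\<phi> \<in> characters A \<Longrightarrow> f \<notin> A \<Longrightarrow> \<phi> f = 0"
  unfolding characters_def by auto

lemma characters_add:
  "\<phi> \<in> characters A \<Longrightarrow> f \<in> A \<Longrightarrow> g \<in> A \<Longrightarrow> \<phi> (\<lambda>x. f x + g x) = \<phi> f + \<phi> g"
  unfolding characters_def by auto

lemma characters_mult_left: "\<phi> \<in> characters A \<Longrightarrow> f \<in> A \<Longrightarrow> \<phi> (\<lambda>x. c * f x) = c * \<phi> f"
  unfolding characters_def by auto

lemma characters_mult: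
  "\<phi> \<in> characters A \<Longrightarrow> f \<in> A \<Longrightarrow> g \<in> A \<Longrightarrow> \<phi> (\<lambda>x. f x * g x) = \<phi> f * \<phi> g"
  unfolding characters_def by auto

lemma characters_one:
  assumes "\<phi> \<in> characters A" "(\<lambda>x. 1) \<in> A" shows "\<phi> (\<lambda>x. 1) = 1"
proof -
  obtain f where f: "f \<in> A" "\<phi> f \<noteq> 0" using assms(1) unfolding characters_def by auto
  have "\<phi> (\<lambda>x. f x * 1) = \<phi> f * \<phi> (\<lambda>x. 1)" by (rule characters_mult[OF assms(1) f(1) assms(2)])
  then show ?thesis using f(2) by simp
qed

lemma characters_const:
  assumes "\<phi> \<in> characters A" "(\<lambda>x. 1) \<in> A" shows "\<phi> (\<lambda>x. c) = c"
  using characters_mult_left[OF assms, of c] characters_one[OF assms] by simp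

lemma characters_diff:
  assumes "\<phi> \<in> characters A" "f \<in> A" "g \<in> A" "(\<lambda>x. (-1) * g x) \<in> A"
  shows "\<phi> (\<lambda>x. f x - g x) = \<phi> f - \<phi> g"
  using characters_add[OF assms(1,2,4)] characters_mult_left[OF assms(1,3), of "-1"] by simp

text \<open>If |\<phi> h| > sup |h|, then h - \<phi> h is invertible in A although \<phi> kills it.\<close>

lemma norm_characters_le:
  assumes \<phi>: "\<phi> \<in> characters A"
    and const: "\<And>c. (\<lambda>x. c) \<in> A"
    and add: "\<And>f g. f \<in> A \<Longrightarrow> g \<in> A \<Longrightarrow> (\<lambda>x. f x + g x) \<in> A"
    and resolvent: "\<And>h B c. h \<in> A \<Longrightarrow> \<forall>x. cmod (h x) \<le> B \<Longrightarrow> B < cmod c \<Longrightarrow>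
      (\<lambda>x. 1 / (h x - c)) \<in> A"
    and h: "h \<in> A" "\<forall>x. cmod (h x) \<le> B"
  shows "cmod (\<phi> h) \<le> B"
proof (rule ccontr)
  define c where "c = \<phi> h"
  assume "\<not> cmod (\<phi> h) \<le> B"
  then have Bc: "B < cmod c" by (simp add: c_def)
  have rA: "(\<lambda>x. 1 / (h x - c)) \<in> A" using resolvent[OF h Bc] .
  have hcA: "(\<lambda>x. h x + (- c)) \<in> A" using add[OF h(1) const] .
  have "\<phi> (\<lambda>x. h x + (- c)) = \<phi> h + \<phi> (\<lambda>x. - c)" by (rule characters_add[OF \<phi> h(1) const])
  also have "\<phi> (\<lambda>x. - c) = - c" by (rule characters_const[OF \<phi> const])
  finally have "\<phi> (\<lambda>x. h x + (- c)) = 0" by (simp add: c_def)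
  moreover have "h x - c \<noteq> 0" for x
    using norm_diff_ge_of_norm_le[of "h x" B c] h(2) Bc by auto
  then have "(\<lambda>x. (h x + (- c)) * (1 / (h x - c))) = (\<lambda>x. 1)"
    by (simp add: fun_eq_iff)
  ultimately have "\<phi> (\<lambda>x. 1) = 0"
    using characters_mult[OF \<phi> hcA rA] by simp
  then show False using characters_one[OF \<phi> const] by simp
qed

lemma norm_characters_CB_le:
  assumes "\<phi> \<in> characters CB" "h \<in> CB" "\<forall>x. cmod (h x) \<le> B"
  shows "cmod (\<phi> h) \<le> B"
  by (rule norm_characters_le[OF assms(1) CB_const CB_add CB_resolvent assms(2,3)])

lemma norm_characters_LUC_le:
  assumes "\<phi> \<in> characters (LUC gm)" "h \<in> LUC gm" "\<forall>x. cmod (h x) \<le> B"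
  shows "cmod (\<phi> h) \<le> B"
  by (rule norm_characters_le[OF assms(1) LUC_const LUC_add LUC_resolvent assms(2,3)])

section \<open>The operators T_\<nu> and the product on G^LUC\<close>

context tgroup
begin

text \<open>Continuity is the case x = ge of the uniform estimate.\<close>

lemma LUC_intro_bounded:
  assumes bounded: "bounded (range f)"
    and uniform: "\<And>s e. e > 0 \<Longrightarrow>
      \<exists>U. open U \<and> s \<in> U \<and> (\<forall>t\<in>U. \<forall>x. cmod (f (gm t x) - f (gm s x)) \<le> e)"
  shows "f \<in> LUC gm"
proof (rule LUC_I[OF _ uniform])
  have "(f \<longlongrightarrow> f s) (at s)" for s
  proof (rule tendstoI)
    fix e :: real assume "e > 0"
    then obtain U where "open U" "s \<in> U" "\<forall>t\<in>U. cmod (f (gm t ge) - f (gm s ge)) \<le> e/2"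
      using uniform[of "e/2" s] by (meson half_gt_zero)
    then show "\<forall>\<^sub>F t in at s. dist (f t) (f s) < e"
      unfolding eventually_at_topological using \<open>e > 0\<close>
      by (intro exI[of _ U]) (auto simp: dist_norm)
  qed
  then have "continuous_on UNIV f" by (simp add: continuous_on_def)
  with bounded show "f \<in> CB" by (simp add: CB_def)
qed

lemma Ltr_LUC:
  assumes f: "f \<in> LUC gm" shows "Ltr gm a f \<in> LUC gm"
  unfolding Ltr_def
proof (rule LUC_intro_bounded)
  show "bounded (range (\<lambda>x. f (gm a x)))"
    using LUC_CB[OF f] unfolding CB_def by (auto intro: bounded_subset)
  fix s and e :: real assume "e > 0"
  then obtain U where U: "open U" "gm a s \<in> U"
      "\<forall>t\<in>U. \<forall>x. cmod (f (gm t x) - f (gm (gm a s) x)) \<le> e"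
    using LUC_D[OF f] by blast
  have "open (gm a -` U)" using open_vimage[OF U(1) continuous_on_left_translation] .
  moreover have "\<forall>t\<in>gm a -` U. \<forall>x. cmod (f (gm a (gm t x)) - f (gm a (gm s x))) \<le> e"
    using U(3) by (simp add: assoc[symmetric])
  ultimately show "\<exists>U. open U \<and> s \<in> U \<and>
      (\<forall>t\<in>U. \<forall>x. cmod (f (gm a (gm t x)) - f (gm a (gm s x))) \<le> e)"
    using U(2) by blast
qed

lemma Top_LUC_of_norm_le:
  assumes f: "f \<in> LUC gm"
    and norm_le: "\<And>h B. h \<in> LUC gm \<Longrightarrow> \<forall>x. cmod (h x) \<le> B \<Longrightarrow> cmod (\<nu> h) \<le> B"
    and diff: "\<And>g h. g \<in> LUC gm \<Longrightarrow> h \<in> LUC gm \<Longrightarrow> \<nu> (\<lambda>x. g x - h x) = \<nu> g - \<nu> h"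
  shows "Top gm \<nu> f \<in> LUC gm"
proof (rule LUC_intro_bounded)
  obtain B where "\<forall>x. cmod (f x) \<le> B" using CB_bounded LUC_CB f by metis
  then have "\<forall>s. cmod (Top gm \<nu> f s) \<le> B"
    unfolding Top_def using norm_le Ltr_LUC[OF f] by (simp add: Ltr_def)
  then show "bounded (range (Top gm \<nu> f))" unfolding bounded_iff by auto
  fix s and e :: real assume "e > 0"
  then obtain U where U: "open U" "s \<in> U" "\<forall>t\<in>U. \<forall>y. cmod (f (gm t y) - f (gm s y)) \<le> e"
    using LUC_D[OF f] by blast
  have "cmod (Top gm \<nu> f (gm t x) - Top gm \<nu> f (gm s x)) \<le> e" if "t \<in> U" for t x
  proof -
    have "Top gm \<nu> f (gm t x) - Top gm \<nu> f (gm s x) =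
        \<nu> (\<lambda>y. Ltr gm (gm t x) f y - Ltr gm (gm s x) f y)"
      unfolding Top_def by (rule diff[symmetric]) (auto intro: Ltr_LUC[OF f])
    also have "cmod \<dots> \<le> e"
      using U(3) that by (intro norm_le LUC_diff Ltr_LUC[OF f]) (simp add: Ltr_def assoc)
    finally show ?thesis .
  qed
  then show "\<exists>U. open U \<and> s \<in> U \<and>
      (\<forall>t\<in>U. \<forall>x. cmod (Top gm \<nu> f (gm t x) - Top gm \<nu> f (gm s x)) \<le> e)"
    using U by blast
qed

lemma Top_LUC:
  assumes "f \<in> LUC gm" "\<nu> \<in> characters (LUC gm)"
  shows "Top gm \<nu> f \<in> LUC gm"
proof (rule Top_LUC_of_norm_le[OF assms(1)])
  show "cmod (\<nu> h) \<le> B" if "h \<in> LUC gm" "\<forall>x. cmod (h x) \<le> B" for h B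
    using norm_characters_LUC_le[OF assms(2) that] .
  show "\<nu> (\<lambda>x. g x - h x) = \<nu> g - \<nu> h" if "g \<in> LUC gm" "h \<in> LUC gm" for g h
    using characters_diff[OF assms(2) that LUC_mult_left[OF that(2)]] .
qed

lemma LUC_Lmc:
  assumes f: "f \<in> LUC gm" shows "f \<in> Lmc gm"
  unfolding Lmc_def
proof (intro CollectI conjI ballI)
  show "f \<in> CB" using LUC_CB f .
  fix \<mu> :: "('a \<Rightarrow> complex) \<Rightarrow> complex" assume "\<mu> \<in> betaG"
  then have \<mu>: "\<mu> \<in> characters CB" by (simp add: betaG_def)
  have "Top gm \<mu> f \<in> LUC gm"
  proof (rule Top_LUC_of_norm_le[OF f])
    show "cmod (\<mu> h) \<le> B" if "h \<in> LUC gm" "\<forall>x. cmod (h x) \<le> B" for h B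
      using norm_characters_CB_le[OF \<mu> LUC_CB[OF that(1)] that(2)] .
    show "\<mu> (\<lambda>x. g x - h x) = \<mu> g - \<mu> h" if "g \<in> LUC gm" "h \<in> LUC gm" for g h
      using characters_diff[OF \<mu> LUC_CB[OF that(1)] LUC_CB[OF that(2)]
          CB_mult_left[OF LUC_CB[OF that(2)]]] .
  qed
  then show "Top gm \<mu> f \<in> CB" by (rule LUC_CB)
qed

lemma Top_add:
  assumes "\<nu> \<in> characters (LUC gm)" "f \<in> LUC gm" "g \<in> LUC gm"
  shows "Top gm \<nu> (\<lambda>x. f x + g x) = (\<lambda>s. Top gm \<nu> f s + Top gm \<nu> g s)"
  using characters_add[OF assms(1) Ltr_LUC[OF assms(2)] Ltr_LUC[OF assms(3)]]
  by (simp add: Top_def Ltr_def)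

lemma Top_mult_left:
  assumes "\<nu> \<in> characters (LUC gm)" "f \<in> LUC gm"
  shows "Top gm \<nu> (\<lambda>x. c * f x) = (\<lambda>s. c * Top gm \<nu> f s)"
  using characters_mult_left[OF assms(1) Ltr_LUC[OF assms(2)]]
  by (simp add: Top_def Ltr_def)

lemma Top_mult:
  assumes "\<nu> \<in> characters (LUC gm)" "f \<in> LUC gm" "g \<in> LUC gm"
  shows "Top gm \<nu> (\<lambda>x. f x * g x) = (\<lambda>s. Top gm \<nu> f s * Top gm \<nu> g s)"
  using characters_mult[OF assms(1) Ltr_LUC[OF assms(2)] Ltr_LUC[OF assms(3)]]
  by (simp add: Top_def Ltr_def)

lemma Top_one:
  assumes "\<nu> \<in> characters (LUC gm)" shows "Top gm \<nu> (\<lambda>x. 1) = (\<lambda>s. 1)"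
  using characters_one[OF assms LUC_const] by (simp add: Top_def Ltr_def)

lemma luc_mult_GLUC:
  assumes \<mu>: "\<mu> \<in> GLUC gm" and \<nu>: "\<nu> \<in> GLUC gm"
  shows "luc_mult gm \<mu> \<nu> \<in> GLUC gm"
proof -
  have \<mu>': "\<mu> \<in> characters (LUC gm)" and \<nu>': "\<nu> \<in> characters (LUC gm)"
    using \<mu> \<nu> by (simp_all add: GLUC_def)
  note T = Top_LUC[OF _ \<nu>']
  show ?thesis
    unfolding GLUC_def characters_def
  proof (intro CollectI conjI ballI allI impI)
    show "\<exists>f\<in>LUC gm. luc_mult gm \<mu> \<nu> f \<noteq> 0"
      using Top_one[OF \<nu>'] characters_one[OF \<mu>' LUC_const] LUC_const
      by (intro bexI[of _ "\<lambda>x. 1"]) (auto simp: luc_mult_def)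
    fix f g c assume f: "f \<in> LUC gm" and g: "g \<in> LUC gm"
    show "luc_mult gm \<mu> \<nu> (\<lambda>x. f x + g x) = luc_mult gm \<mu> \<nu> f + luc_mult gm \<mu> \<nu> g"
      using characters_add[OF \<mu>' T[OF f] T[OF g]] f g LUC_add[OF f g]
      by (simp add: luc_mult_def Top_add[OF \<nu>' f g])
    show "luc_mult gm \<mu> \<nu> (\<lambda>x. f x * g x) = luc_mult gm \<mu> \<nu> f * luc_mult gm \<mu> \<nu> g"
      using characters_mult[OF \<mu>' T[OF f] T[OF g]] f g LUC_mult[OF f g]
      by (simp add: luc_mult_def Top_mult[OF \<nu>' f g])
  next
    fix f c assume f: "f \<in> LUC gm"
    show "luc_mult gm \<mu> \<nu> (\<lambda>x. c * f x) = c * luc_mult gm \<mu> \<nu> f"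
      using characters_mult_left[OF \<mu>' T[OF f]] f LUC_mult_left[OF f]
      by (simp add: luc_mult_def Top_mult_left[OF \<nu>' f])
  qed (simp add: luc_mult_def)
qed

end

section \<open>Non-evaluation characters and compact supports\<close>

lemma non_evaluation_kernel_point:
  assumes \<nu>: "\<nu> \<in> GLUC gm" "\<nu> \<notin> range (evalmap gm)"
  shows "\<exists>g. g \<in> LUC gm \<and> \<nu> g = 0 \<and> g y = 1"
proof -
  have \<nu>': "\<nu> \<in> characters (LUC gm)" using \<nu> by (simp add: GLUC_def)
  obtain f where f: "\<nu> f \<noteq> evalmap gm y f" using \<nu> by auto
  have fL: "f \<in> LUC gm"
  proof (rule ccontr)
    assume "f \<notin> LUC gm"
    then show False using f characters_outside[OF \<nu>'] by (simp add: evalmap_def)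
  qed
  with f have fy: "\<nu> f \<noteq> f y" by (simp add: evalmap_def)
  define g where "g = (\<lambda>x. (1 / (f y - \<nu> f)) * (f x + (- \<nu> f)))"
  have L: "(\<lambda>x. f x + (- \<nu> f)) \<in> LUC gm" by (rule LUC_add[OF fL LUC_const])
  have "\<nu> (\<lambda>x. f x + (- \<nu> f)) = \<nu> f + \<nu> (\<lambda>x. - \<nu> f)" by (rule characters_add[OF \<nu>' fL LUC_const])
  also have "\<nu> (\<lambda>x. - \<nu> f) = - \<nu> f" by (rule characters_const[OF \<nu>' LUC_const])
  finally have "\<nu> (\<lambda>x. f x + (- \<nu> f)) = 0" by simp
  then have "\<nu> g = 0" unfolding g_def characters_mult_left[OF \<nu>' L] by simp
  moreover have "g y = 1" unfolding g_def using fy by (simp add: field_simps)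
  moreover have "g \<in> LUC gm" unfolding g_def by (rule LUC_mult_left[OF L])
  ultimately show ?thesis by blast
qed

lemma LUC_kernel_sum_norm_squares:
  assumes \<nu>: "\<nu> \<in> characters (LUC gm)" and "finite Y"
    and G: "\<And>y. y \<in> Y \<Longrightarrow> G y \<in> LUC gm \<and> \<nu> (G y) = 0"
  defines "w \<equiv> \<lambda>x. complex_of_real (\<Sum>y\<in>Y. (cmod (G y x))^2)"
  shows "w \<in> LUC gm \<and> \<nu> w = 0"
  unfolding w_def using \<open>finite Y\<close> G
proof (induction Y rule: finite_induct)
  case empty
  show ?case using LUC_const characters_const[OF \<nu> LUC_const, of 0] by simp
next
  case (insert y Y)
  define v where "v = (\<lambda>x. complex_of_real (\<Sum>y\<in>Y. (cmod (G y x))^2))"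
  have v: "v \<in> LUC gm" "\<nu> v = 0" using insert by (simp_all add: v_def)
  have Gy: "G y \<in> LUC gm" "\<nu> (G y) = 0" using insert by auto
  define k where "k = (\<lambda>x. complex_of_real ((cmod (G y x))^2))"
  have "k = (\<lambda>x. G y x * cnj (G y x))" unfolding k_def by (simp only: complex_norm_square)
  then have sq: "k \<in> LUC gm" "\<nu> k = 0"
    using LUC_mult[OF Gy(1) LUC_cnj[OF Gy(1)]] characters_mult[OF \<nu> Gy(1) LUC_cnj[OF Gy(1)]] Gy(2)
    by simp_all
  have "(\<lambda>x. complex_of_real (\<Sum>y\<in>insert y Y. (cmod (G y x))^2)) = (\<lambda>x. v x + k x)"
    using insert.hyps by (simp add: v_def k_def fun_eq_iff)
  then show ?case using LUC_add[OF v(1) sq(1)] characters_add[OF \<nu> v(1) sq(1)] v(2) sq(2) by simp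
qed

text \<open>W is the sum of |g_y|^2 over finitely many kernel functions g_y with g_y y = 1,
  chosen by compactness of K.\<close>

lemma non_evaluation_kernel_ge_on_compact:
  assumes \<nu>: "\<nu> \<in> GLUC gm" "\<nu> \<notin> range (evalmap gm)" and K: "compact K"
  obtains W :: "'a::topological_space \<Rightarrow> real"
  where "(\<lambda>x. complex_of_real (W x)) \<in> LUC gm" "\<nu> (\<lambda>x. complex_of_real (W x)) = 0"
    "\<And>x. x \<in> K \<Longrightarrow> 1/4 \<le> W x"
proof -
  obtain G where G: "\<And>y. G y \<in> LUC gm \<and> \<nu> (G y) = 0 \<and> G y y = 1"
    using non_evaluation_kernel_point[OF \<nu>] by metis
  define Near where "Near y = {x. 1/2 < cmod (G y x)}" for y
  have "open (Near y)" for y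
    using LUC_CB[of "G y"] G unfolding Near_def CB_def
    by (auto intro!: open_Collect_less continuous_intros)
  moreover have "K \<subseteq> (\<Union>y\<in>K. Near y)" using G by (auto simp: Near_def)
  ultimately obtain Y where Y: "Y \<subseteq> K" "finite Y" "K \<subseteq> (\<Union>y\<in>Y. Near y)"
    using compactE_image[OF K, of K Near] by metis
  define W where "W x = (\<Sum>y\<in>Y. (cmod (G y x))^2)" for x
  have "1/4 \<le> W x" if x: "x \<in> K" for x
  proof -
    obtain y where y: "y \<in> Y" "1/2 < cmod (G y x)" using Y(3) x by (auto simp: Near_def)
    then have "(1/2)^2 \<le> (cmod (G y x))^2" by (intro power_mono) auto
    also have "\<dots> \<le> W x" unfolding W_def using y(1) Y(2) by (intro member_le_sum) auto
    finally show ?thesis by (simp add: power2_eq_square)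
  qed
  with LUC_kernel_sum_norm_squares[OF _ Y(2), of \<nu> gm G] \<nu> G that[of W] show ?thesis
    by (simp add: W_def GLUC_def)
qed

locale lc_group = tgroup gm ge gi for gm :: "'a::t2_space \<Rightarrow> 'a \<Rightarrow> 'a" and ge gi +
  assumes locally_compact: "locally_compact_space (euclidean :: 'a topology)"
begin

text \<open>Off the compact set N^-1 K, with N a compact neighbourhood of s, both f (t x) and
  f (s x) equal c for t \<in> N.\<close>

lemma LUC_const_outside_compact:
  assumes f: "continuous_on UNIV f" and K: "compact K" and const: "\<And>x. x \<notin> K \<Longrightarrow> f x = c"
  shows "f \<in> LUC gm"
proof (rule LUC_intro_bounded)
  have "range f \<subseteq> f ` K \<union> {c}" using const by auto
  moreover have "bounded (f ` K \<union> {c})"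
    using compact_imp_bounded[OF compact_continuous_image[OF continuous_on_subset[OF f] K]] by simp
  ultimately show "bounded (range f)" by (rule bounded_subset[rotated])
next
  fix s :: 'a and e :: real assume e: "e > 0"
  obtain V N where VN: "open V" "compact N" "s \<in> V" "V \<subseteq> N"
    using locally_compact_spaceE[OF locally_compact] .
  define C where "C = (\<lambda>p. gm (gi (fst p)) (snd p)) ` (N \<times> K)"
  have "continuous_on UNIV (\<lambda>p. gm (gi (fst p)) (snd p))"
  proof -
    have "continuous_on UNIV (\<lambda>p. (gi (fst p), snd p))"
      by (intro continuous_intros continuous_on_compose2[OF continuous_on_inverse]) auto
    from continuous_on_compose2[OF continuous_on_mult this] show ?thesis by simp
  qed
  then have "compact C" unfolding C_def
    by (intro compact_continuous_image compact_Times VN K) (auto intro: continuous_on_subset)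
  obtain X where X: "open X" "s \<in> X"
    "\<And>t x. t \<in> X \<Longrightarrow> x \<in> C \<Longrightarrow> cmod (f (gm t x) - f (gm s x)) < e"
    using left_translation_uniform_on_compact[OF f \<open>compact C\<close> e] by blast
  have "cmod (f (gm t x) - f (gm s x)) \<le> e" if t: "t \<in> X \<inter> V" for t x
  proof (cases "x \<in> C")
    case True
    then show ?thesis using X(3)[of t x] t by (simp add: less_imp_le)
  next
    case False
    have "gm r x \<notin> K" if "r \<in> N" for r
    proof
      assume "gm r x \<in> K"
      then have "gm (gi r) (gm r x) \<in> C"
        unfolding C_def using that by (intro image_eqI[of _ _ "(r, gm r x)"]) auto
      then show False using False by (simp add: assoc[symmetric])
    qed
    moreover have "t \<in> N" "s \<in> N" using t VN by auto
    ultimately show ?thesis using const e by auto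
  qed
  then show "\<exists>U. open U \<and> s \<in> U \<and> (\<forall>t\<in>U. \<forall>x. cmod (f (gm t x) - f (gm s x)) \<le> e)"
    using X VN by (intro exI[of _ "X \<inter> V"]) auto
qed

text \<open>h = (h / max W (1/4)) W, and the first factor is again continuous with support in K.\<close>

lemma non_evaluation_vanishes_compact_support:
  assumes \<nu>: "\<nu> \<in> GLUC gm" "\<nu> \<notin> range (evalmap gm)"
    and h: "continuous_on UNIV h" and K: "compact K" and h0: "\<And>x. x \<notin> K \<Longrightarrow> h x = 0"
  shows "\<nu> h = 0"
proof -
  have \<nu>': "\<nu> \<in> characters (LUC gm)" using \<nu> by (simp add: GLUC_def)
  obtain W where W: "(\<lambda>x. complex_of_real (W x)) \<in> LUC gm" "\<nu> (\<lambda>x. complex_of_real (W x)) = 0"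
    "\<And>x. x \<in> K \<Longrightarrow> 1/4 \<le> W x"
    using non_evaluation_kernel_ge_on_compact[OF \<nu> K] by blast
  define u where "u x = h x / complex_of_real (max (W x) (1/4))" for x
  have "continuous_on UNIV W"
    using W(1) LUC_CB continuous_on_Re unfolding CB_def by fastforce
  then have "continuous_on UNIV u"
    unfolding u_def by (intro continuous_intros h) auto
  then have uL: "u \<in> LUC gm"
    by (rule LUC_const_outside_compact[OF _ K]) (simp add: u_def h0)
  have "h = (\<lambda>x. u x * complex_of_real (W x))"
  proof
    fix x show "h x = u x * complex_of_real (W x)"
    proof (cases "x \<in> K")
      case True
      then have "max (W x) (1/4) = W x" "W x \<noteq> 0" using W(3)[of x] by auto
      then show ?thesis by (simp add: u_def)
    qed (simp add: u_def h0)
  qed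
  then show ?thesis using characters_mult[OF \<nu>' uL W(1)] W(2) by simp
qed

lemma luc_mult_not_evaluation:
  assumes \<mu>: "\<mu> \<in> GLUC gm" and \<nu>: "\<nu> \<in> GLUC gm" "\<nu> \<notin> range (evalmap gm)"
  shows "luc_mult gm \<mu> \<nu> \<notin> range (evalmap gm)"
proof
  assume "luc_mult gm \<mu> \<nu> \<in> range (evalmap gm)"
  then obtain x where x: "luc_mult gm \<mu> \<nu> = evalmap gm x" by auto
  obtain g :: "'a \<Rightarrow> real" and K where g: "continuous_on UNIV g" "compact K"
    "\<And>y. y \<notin> K \<Longrightarrow> g y = 0" "g x = 1" "\<And>y. 0 \<le> g y \<and> g y \<le> 1"
    using bump_function[OF locally_compact] by blast
  define f where "f y = complex_of_real (g y)" for y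
  have fc: "continuous_on UNIV f" unfolding f_def by (intro continuous_intros g(1))
  have fL: "f \<in> LUC gm" using LUC_const_outside_compact[OF fc g(2)] g(3) by (simp add: f_def)
  have "Top gm \<nu> f = (\<lambda>s. 0)"
  proof
    fix s
    have "continuous_on UNIV (Ltr gm s f)"
      unfolding Ltr_def using continuous_on_compose2[OF fc continuous_on_left_translation] by simp
    moreover have "Ltr gm s f y = 0" if "y \<notin> gm s -` K" for y
      using g(3) that by (simp add: Ltr_def f_def)
    ultimately show "Top gm \<nu> f s = 0" unfolding Top_def
      using non_evaluation_vanishes_compact_support[OF \<nu>] compact_vimage_left_translation[OF g(2)]
      by blast
  qed
  then have "luc_mult gm \<mu> \<nu> f = 0"
    using fL characters_const[of \<mu> "LUC gm" 0] \<mu> LUC_const[of 1 gm]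
    by (simp add: luc_mult_def GLUC_def)
  moreover have "evalmap gm x f = 1" using fL g(4) by (simp add: evalmap_def f_def)
  ultimately show False using x by simp
qed

end

section \<open>Existence of non-evaluation characters\<close>

definition cocompact :: "'a::topological_space filter" where
  "cocompact = (INF K\<in>{K. compact K}. principal (- K))"

lemma eventually_cocompact:
  fixes P :: "'a::topological_space \<Rightarrow> bool"
  shows "eventually P cocompact \<longleftrightarrow> (\<exists>K. compact K \<and> (\<forall>x. x \<notin> K \<longrightarrow> P x))"
proof -
  have "eventually P cocompact \<longleftrightarrow> (\<exists>K\<in>{K. compact K}. eventually P (principal (- K)))"
    unfolding cocompact_def
  proof (rule eventually_INF_base)
    fix K L :: "'a set" assume "K \<in> {K. compact K}" "L \<in> {K. compact K}"
    then show "\<exists>M\<in>{K. compact K}. principal (- M) \<le> inf (principal (- K)) (principal (- L))"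
      by (intro bexI[of _ "K \<union> L"]) auto
  qed auto
  then show ?thesis by (auto simp: eventually_principal)
qed

lemma cocompact_neq_bot:
  assumes "\<not> compact (UNIV :: 'a::topological_space set)"
  shows "(cocompact :: 'a filter) \<noteq> bot"
proof
  assume "(cocompact :: 'a filter) = bot"
  then obtain K :: "'a set" where "compact K" "\<forall>x. x \<in> K"
    using eventually_cocompact[of "\<lambda>x. False"] by auto
  then show False using assms by (metis UNIV_eq_I)
qed

lemma cluster_point_eq:
  fixes a b :: "'a::topological_space \<Rightarrow> 'b::t2_space"
  assumes "continuous_on UNIV a" "continuous_on UNIV b"
    and "\<forall>\<^sub>F \<psi> in F. a \<psi> = b \<psi>" and "inf (nhds \<phi>) F \<noteq> bot"
  shows "a \<phi> = b \<phi>"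
proof (rule ccontr)
  assume "a \<phi> \<noteq> b \<phi>"
  moreover have "closed {\<psi>. a \<psi> = b \<psi>}" using assms(1,2) by (rule closed_Collect_eq)
  ultimately have "\<forall>\<^sub>F \<psi> in nhds \<phi>. a \<psi> \<noteq> b \<psi>"
    using eventually_nhds_in_open[of "- {\<psi>. a \<psi> = b \<psi>}" \<phi>] by (auto simp: open_Compl)
  with assms(3) have "\<forall>\<^sub>F \<psi> in inf (nhds \<phi>) F. False"
    unfolding eventually_inf by blast
  with assms(4) show False by (simp add: eventually_False)
qed

text \<open>Characters are pointwise limits of evaluations: every identity defining a character
  holds at each evaluation and is closed in the product topology.\<close>

lemma cluster_point_evalmap_GLUC:
  assumes \<phi>: "inf (nhds \<phi>) (filtermap (evalmap gm) F) \<noteq> bot"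
  shows "\<phi> \<in> GLUC gm"
proof -
  have coord: "continuous_on UNIV (\<lambda>\<psi>::('a \<Rightarrow> complex) \<Rightarrow> complex. \<psi> f)" for f
    by (rule continuous_on_product_coordinates)
  have limit: "a \<phi> = b \<phi>"
    if "continuous_on UNIV a" "continuous_on UNIV b" "\<And>x. a (evalmap gm x) = b (evalmap gm x)"
    for a b :: "(('a::topological_space \<Rightarrow> complex) \<Rightarrow> complex) \<Rightarrow> complex"
    using cluster_point_eq[OF that(1,2) _ \<phi>] that(3) by (simp add: eventually_filtermap)
  show ?thesis
    unfolding GLUC_def characters_def
  proof (intro CollectI conjI allI impI ballI)
    show "\<phi> f = 0" if "f \<notin> LUC gm" for f
      using limit[of "\<lambda>\<psi>. \<psi> f" "\<lambda>_. 0"] coord that by (simp add: evalmap_def)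
    show "\<exists>f\<in>LUC gm. \<phi> f \<noteq> 0"
      using limit[of "\<lambda>\<psi>. \<psi> (\<lambda>x. 1)" "\<lambda>_. 1"] coord LUC_const
      by (intro bexI[of _ "\<lambda>x. 1"]) (auto simp: evalmap_def)
    fix f g c assume f: "f \<in> LUC gm" and g: "g \<in> LUC gm"
    show "\<phi> (\<lambda>x. f x + g x) = \<phi> f + \<phi> g"
      using limit[of "\<lambda>\<psi>. \<psi> (\<lambda>x. f x + g x)" "\<lambda>\<psi>. \<psi> f + \<psi> g"] coord f g LUC_add[OF f g]
      by (simp add: evalmap_def continuous_on_add)
    show "\<phi> (\<lambda>x. f x * g x) = \<phi> f * \<phi> g"
      using limit[of "\<lambda>\<psi>. \<psi> (\<lambda>x. f x * g x)" "\<lambda>\<psi>. \<psi> f * \<psi> g"] coord f g LUC_mult[OF f g]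
      by (simp add: evalmap_def continuous_on_mult)
  next
    fix f c assume f: "f \<in> LUC gm"
    show "\<phi> (\<lambda>x. c * f x) = c * \<phi> f"
      using limit[of "\<lambda>\<psi>. \<psi> (\<lambda>x. c * f x)" "\<lambda>\<psi>. c * \<psi> f"] coord f LUC_mult_left[OF f]
      by (simp add: evalmap_def continuous_on_mult continuous_on_const)
  qed
qed

text \<open>By Tychonoff, the evaluations lie in a compact product of discs.\<close>

lemma exists_cluster_point_evalmap:
  assumes "F \<noteq> bot"
  obtains \<phi> where "inf (nhds \<phi>) (filtermap (evalmap gm) F) \<noteq> bot"
proof -
  have "\<exists>B. \<forall>x. cmod (evalmap gm x f) \<le> B" for f
  proof (cases "f \<in> LUC gm")
    case True
    then show ?thesis using CB_bounded[OF LUC_CB] by (simp add: evalmap_def)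
  qed (auto simp: evalmap_def)
  then obtain B where B: "\<And>f x. cmod (evalmap gm x f) \<le> B f" by metis
  define S where "S = PiE UNIV (\<lambda>f. cball (0::complex) (B f))"
  have "compactin (product_topology (\<lambda>_. euclidean) UNIV) S"
    unfolding S_def by (simp add: compactin_PiE)
  then have "compact S" by (simp add: euclidean_product_topology)
  moreover have "filtermap (evalmap gm) F \<noteq> bot" using assms by (simp add: filtermap_bot_iff)
  moreover have "\<forall>\<^sub>F \<psi> in filtermap (evalmap gm) F. \<psi> \<in> S"
    unfolding eventually_filtermap S_def using B by (intro always_eventually) (auto simp: PiE_iff)
  ultimately show ?thesis using that unfolding compact_filter by blast
qed

context lc_group
begin

lemma exists_non_evaluation:
  assumes "\<not> compact (UNIV :: 'a set)"
  shows "GLUC gm - range (evalmap gm) \<noteq> {}"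
proof -
  obtain \<phi> where \<phi>: "inf (nhds \<phi>) (filtermap (evalmap gm) cocompact) \<noteq> bot"
    using exists_cluster_point_evalmap cocompact_neq_bot[OF assms] by blast
  have "\<phi> \<noteq> evalmap gm y" for y
  proof
    assume y: "\<phi> = evalmap gm y"
    obtain g :: "'a \<Rightarrow> real" and K where g: "continuous_on UNIV g" "compact K"
      "\<And>x. x \<notin> K \<Longrightarrow> g x = 0" "g y = 1"
      using bump_function[OF locally_compact] by metis
    define f where "f x = complex_of_real (g x)" for x
    have fc: "continuous_on UNIV f" unfolding f_def by (intro continuous_intros g(1))
    have fL: "f \<in> LUC gm" using LUC_const_outside_compact[OF fc g(2)] g(3) by (simp add: f_def)
    have "\<forall>\<^sub>F \<psi> in filtermap (evalmap gm) cocompact. \<psi> f = 0"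
      unfolding eventually_filtermap eventually_cocompact
      using g(2,3) fL by (auto simp: evalmap_def f_def)
    then have "\<phi> f = 0"
      using cluster_point_eq[OF continuous_on_product_coordinates continuous_on_const _ \<phi>] by blast
    moreover have "evalmap gm y f = 1" using fL g(4) by (simp add: evalmap_def f_def)
    ultimately show False using y by simp
  qed
  with cluster_point_evalmap_GLUC[OF \<phi>] show ?thesis by blast
qed

lemma left_ideal_remainder:
  assumes "\<not> compact (UNIV :: 'a set)"
  shows "left_ideal gm (GLUC gm - range (evalmap gm))"
  unfolding left_ideal_def
  using exists_non_evaluation[OF assms] luc_mult_GLUC luc_mult_not_evaluation by blast

end

section \<open>Weak left cancellativity\<close>

lemma (in lc_group) top_weak_left_cancellative: "top_weak_left_cancellative gm"
  unfolding top_weak_left_cancellative_def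
proof
  fix u :: 'a
  obtain g :: "'a \<Rightarrow> real" and K where g: "continuous_on UNIV g" "compact K"
    "\<And>x. x \<notin> K \<Longrightarrow> g x = 0" "g u = 1" "\<And>x. 0 \<le> g x \<and> g x \<le> 1"
    using bump_function[OF locally_compact] by blast
  define A where "A = {x. 1/2 \<le> g x}"
  have "closed A" unfolding A_def by (intro closed_Collect_le continuous_intros g(1))
  moreover have "A \<subseteq> K" using g(3) unfolding A_def by force
  ultimately have "compact A" using compact_Int_closed[OF g(2)] by (metis inf.absorb_iff2)
  define k where "k x = complex_of_real (max 0 (1/2 - g x))" for x
  have "k \<in> LUC gm"
    by (rule LUC_const_outside_compact[OF _ g(2), of _ "1/2"])
      (use g in \<open>auto simp: k_def intro!: continuous_intros\<close>)
  moreover have "A = k -` {0}" unfolding A_def k_def by (auto simp: max_def split: if_splits)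
  ultimately have "A \<in> Zsets gm" unfolding Zsets_def using LUC_Lmc by blast
  define f where "f x = complex_of_real (1 - g x)" for x
  have "f \<in> LUC gm"
    by (rule LUC_const_outside_compact[OF _ g(2), of _ 1])
      (use g in \<open>auto simp: f_def intro!: continuous_intros\<close>)
  moreover have "cmod (f x) = 1 - g x" for x
    unfolding f_def norm_of_real using g(5)[of x] by simp
  then have "A = Eset (1/2) f" unfolding A_def Eset_def by auto
  moreover have "f u = 0" using g(4) by (simp add: f_def)
  ultimately have "A \<in> esets gm u" unfolding esets_def using LUC_Lmc by force
  with \<open>compact A\<close> \<open>A \<in> Zsets gm\<close> compact_vimage_left_translation[OF \<open>compact A\<close>]
  show "\<exists>A. compact A \<and> A \<in> Zsets gm \<and> A \<in> esets gm u \<and> (\<forall>v. compact {t. gm v t \<in> A})"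
    by (auto simp: vimage_def)
qed

theorem corollary4p8:
  fixes gm :: "'a::t2_space \<Rightarrow> 'a \<Rightarrow> 'a" and ge :: 'a and gi :: "'a \<Rightarrow> 'a"
  assumes "topological_group gm ge gi"
    and "locally_compact_space (euclidean :: 'a topology)"
    and "\<not> compact (UNIV :: 'a set)"
  shows "left_ideal gm (GLUC gm - range (evalmap gm)) \<longleftrightarrow> top_weak_left_cancellative gm"
proof -
  interpret lc_group gm ge gi
    using assms(1,2) by unfold_locales
  show ?thesis
    using left_ideal_remainder[OF assms(3)] top_weak_left_cancellative by simp
qed

end
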